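(* Let $n \ge 1$ be an integer and let $s(n,3)$ be the maximum cardinality of a Sidon-type set of strength 3 in $\mathbb{Z}_n$. Then: (i) $s(n,3) \ge \lfloor n/4 \rfloor$ if $n$ is even; (ii) $s(n,3) \ge \lfloor (n+1)/6 \rfloor$ if $n$ is odd and has no divisors congruent to $5 \bmod 6$; (iii) $s(n,3) \ge \frac{(p+1)n}{6p}$ if $n$ is odd and $p$ is its smallest divisor which is congruent to $5 \bmod 6$.
   Context: A subset $S \subseteq \mathbb{Z}_n$ (viewed as a set of integers in $[1,n]$) is a Sidon-type set of strength $t$ if no non-trivial sum $\varepsilon_1 x_1 + \cdots + \varepsilon_t x_t$, with $\varepsilon_i \in \{0,\pm1\}$ and $x_1,\dots,x_t \in S$ not necessarily distinct, is congruent to $0 \bmod n$. Such a sum is called non-trivial if at least one $\varepsilon_i$ is nonzero and no element of $S$ appears in it both with coefficient $+1$ and with coefficient $-1$. $s(n,t)$ denotes the maximum cardinality of a Sidon-type set of strength $t$ in $\mathbb{Z}_n$. *)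

theory Defs
  imports Complex_Main
begin

text \<open>A Sidon-type set of strength t in Z_n, viewed as a set of integers in [1,n].\<close>
definition sidon_type :: "nat \<Rightarrow> nat \<Rightarrow> int set \<Rightarrow> bool" where
  "sidon_type n t S \<longleftrightarrow> S \<subseteq> {1..int n} \<and>
     (\<forall>(e :: nat \<Rightarrow> int) (x :: nat \<Rightarrow> int).
        (\<forall>i<t. e i \<in> {-1, 0, 1}) \<and> (\<forall>i<t. x i \<in> S) \<and> (\<exists>i<t. e i \<noteq> 0) \<and>
        \<not> (\<exists>i<t. \<exists>j<t. x i = x j \<and> e i = 1 \<and> e j = -1)
        \<longrightarrow> \<not> (int n dvd (\<Sum>i<t. e i * x i)))"

definition s :: "nat \<Rightarrow> nat \<Rightarrow> nat" where
  "s n t = Max (card ` {S. sidon_type n t S})"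

end

theory Submission
  imports Defs "HOL-Number_Theory.Cong"
begin

text \<open>Up to sign, a non-trivial signed sum of at most three elements of \<open>S \<subseteq> [1, n]\<close> is
  \<open>x\<close>, \<open>x + y\<close>, \<open>x + y + z\<close>, \<open>x + y - z\<close> or a difference \<open>x - y\<close> of distinct elements, and the
  last is never divisible by \<open>n\<close>. For even \<open>n\<close> the odd numbers below \<open>n/2\<close> avoid the other four:
  sums of one or three of them are odd, sums of two lie strictly between \<open>0\<close> and \<open>n\<close>. For a
  divisor \<open>d\<close> of \<open>n\<close> so do the numbers in \<open>[1, n]\<close> whose residue mod \<open>d\<close> lies strictly between
  \<open>d/3\<close> and \<open>d/2\<close>, because the residues of \<open>x\<close>, \<open>x + y\<close> and \<open>x + y - z\<close> then add up to a number
  in \<open>(0, d)\<close> and those of \<open>x + y + z\<close> to one in \<open>(d, 2d)\<close>. For odd \<open>d\<close> there are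
  \<open>\<lfloor>(d + 1)/6\<rfloor>\<close> such residues, hence \<open>(n/d) \<lfloor>(d + 1)/6\<rfloor>\<close> such numbers.\<close>

lemma not_dvd_between_multiples:
  fixes d k v :: int
  assumes "k * d < v" "v < (k + 1) * d"
  shows "\<not> d dvd v"
proof
  assume "d dvd v"
  then obtain q where "v = d * q" ..
  with assms have "k < q" "q < k + 1"
    by (auto simp: mult.commute mult_less_cancel_left)
  then show False by simp
qed

lemma not_dvd_diff_distinct:
  fixes x y :: int
  assumes "x \<in> {1..int n}" "y \<in> {1..int n}" "x \<noteq> y"
  shows "\<not> int n dvd x - y"
proof -
  have "0 < \<bar>x - y\<bar>" "\<bar>x - y\<bar> < int n" using assms by auto
  then show ?thesis using zdvd_not_zless by (metis dvd_abs_iff)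
qed

lemma sidon_type_3I:
  fixes S :: "int set"
  assumes bounded: "S \<subseteq> {1..int n}"
    and single: "\<And>x. x \<in> S \<Longrightarrow> \<not> int n dvd x"
    and pair: "\<And>x y. x \<in> S \<Longrightarrow> y \<in> S \<Longrightarrow> \<not> int n dvd x + y"
    and triple: "\<And>x y z. x \<in> S \<Longrightarrow> y \<in> S \<Longrightarrow> z \<in> S \<Longrightarrow> \<not> int n dvd x + y + z"
    and mixed: "\<And>x y z. x \<in> S \<Longrightarrow> y \<in> S \<Longrightarrow> z \<in> S \<Longrightarrow> \<not> int n dvd x + y - z"
  shows "sidon_type n 3 S"
  unfolding sidon_type_def
proof (intro conjI allI impI)
  fix e x :: "nat \<Rightarrow> int"
  assume h: "(\<forall>i<3. e i \<in> {- 1, 0, 1}) \<and> (\<forall>i<3. x i \<in> S) \<and> (\<exists>i<3. e i \<noteq> 0) \<and>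
       \<not> (\<exists>i<3. \<exists>j<3. x i = x j \<and> e i = 1 \<and> e j = - 1)"
  have idx: "(0::nat) < 3" "(1::nat) < 3" "(2::nat) < 3" by simp_all
  have e: "e 0 \<in> {-1,0,1}" "e 1 \<in> {-1,0,1}" "e 2 \<in> {-1,0,1}"
    and x: "x 0 \<in> S" "x 1 \<in> S" "x 2 \<in> S"
    using h idx by blast+
  obtain k where "k < 3" "e k \<noteq> 0" using h by blast
  then have nonzero: "e 0 \<noteq> 0 \<or> e 1 \<noteq> 0 \<or> e 2 \<noteq> 0"
    by (auto simp: less_Suc_eq numeral_3_eq_3 numeral_2_eq_2)
  have no_cancel: "x i \<noteq> x j" if "i < 3" "j < 3" "e i = 1" "e j = -1" for i j
    using h that by blast
  have diff: "\<not> int n dvd x i - x j" if "i < 3" "j < 3" "e i * e j = -1" for i j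
  proof -
    have "e i \<in> {-1,0,1}" "e j \<in> {-1,0,1}" using h that by blast+
    with \<open>e i * e j = -1\<close> have "(e i = 1 \<and> e j = -1) \<or> (e j = 1 \<and> e i = -1)" by auto
    with no_cancel that have "x i \<noteq> x j" by metis
    moreover have "x i \<in> {1..int n}" "x j \<in> {1..int n}" using h that bounded by blast+
    ultimately show ?thesis by (rule not_dvd_diff_distinct[rotated 2])
  qed
  \<comment> \<open>In the 27 sign patterns, sums with more minus than plus signs are negated first.\<close>
  show "\<not> int n dvd (\<Sum>i<3. e i * x i)"
    using e nonzero
      single[OF x(1)] single[OF x(2)] single[OF x(3)]
      pair[OF x(1) x(2)] pair[OF x(1) x(3)] pair[OF x(2) x(3)]
      triple[OF x(1) x(2) x(3)]
      mixed[OF x(1) x(2) x(3)] mixed[OF x(1) x(3) x(2)] mixed[OF x(2) x(3) x(1)]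
      diff[of 0 1] diff[of 0 2] diff[of 1 2]
    by (elim insertE emptyE; simp add: eval_nat_numeral algebra_simps;
        (subst dvd_minus_iff[symmetric], simp add: algebra_simps)?)
qed (fact bounded)

lemma card_le_s:
  assumes "sidon_type n t S"
  shows "card S \<le> s n t"
proof -
  have "{S. sidon_type n t S} \<subseteq> Pow {1..int n}"
    unfolding sidon_type_def by auto
  then have "finite {S. sidon_type n t S}"
    by (rule finite_subset) simp
  with assms show ?thesis
    unfolding s_def by (intro Max_ge) auto
qed

lemma sidon_type_odd_below_half:
  assumes "even n" and S: "\<And>x. x \<in> S \<Longrightarrow> odd x \<and> 0 < x \<and> 2 * x < int n"
  shows "sidon_type n 3 S"
proof (rule sidon_type_3I)
  have odd_not_dvd: "\<not> int n dvd v" if "odd v" for v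
    using \<open>even n\<close> that dvd_trans[of 2 "int n" v] by auto
  show "S \<subseteq> {1..int n}" using S by fastforce
  show "\<not> int n dvd x" if "x \<in> S" for x
    using S[OF that] by (intro zdvd_not_zless) auto
  show "\<not> int n dvd x + y" if "x \<in> S" "y \<in> S" for x y
    using S[OF that(1)] S[OF that(2)] by (intro zdvd_not_zless) auto
  show "\<not> int n dvd x + y + z" "\<not> int n dvd x + y - z" if "x \<in> S" "y \<in> S" "z \<in> S" for x y z
    using S[OF that(1)] S[OF that(2)] S[OF that(3)] by (intro odd_not_dvd; simp)+
qed

lemma s_ge_quarter:
  assumes "even n"
  shows "n div 4 \<le> s n 3"
proof -
  define S where "S = (\<lambda>k::int. 2 * k + 1) ` {0..<int (n div 4)}"
  have "sidon_type n 3 S"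
  proof (rule sidon_type_odd_below_half[OF assms])
    fix x assume "x \<in> S"
    then obtain k where "x = 2 * k + 1" "0 \<le> k" "k + 1 \<le> int (n div 4)"
      unfolding S_def by auto
    moreover have "4 * int (n div 4) \<le> int n" by linarith
    ultimately show "odd x \<and> 0 < x \<and> 2 * x < int n" by simp
  qed
  moreover have "card S = n div 4"
    unfolding S_def by (subst card_image) (auto simp: inj_on_def)
  ultimately show ?thesis using card_le_s by metis
qed

definition between_third_and_half :: "int \<Rightarrow> int set" where
  "between_third_and_half d = {r. d < 3 * r \<and> 2 * r < d}"

lemma between_third_and_half_eq:
  "between_third_and_half d = {d div 3 + 1 .. (d - 1) div 2}"
  unfolding between_third_and_half_def by (auto; presburger)

lemma card_between_third_and_half:
  assumes "odd d"
  shows "card (between_third_and_half d) = nat ((d + 1) div 6)"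
proof -
  from assms obtain k where d: "d = 2 * k + 1" by (rule oddE)
  have "(2 * k + 1) div 3 + (k + 1) div 3 = k" "(2 * k + 2) div 6 = (k + 1) div 3"
    by presburger+
  then have "(d - 1) div 2 - (d div 3 + 1) + 1 = (d + 1) div 6"
    unfolding d by simp
  then show ?thesis
    unfolding between_third_and_half_eq by simp
qed

lemma sidon_type_residues_between_third_and_half:
  fixes d :: int
  assumes "0 < d" "d dvd int n" and bounded: "S \<subseteq> {1..int n}"
    and residues: "\<And>x. x \<in> S \<Longrightarrow> x mod d \<in> between_third_and_half d"
  shows "sidon_type n 3 S"
proof (rule sidon_type_3I[OF bounded])
  have not_dvd: "\<not> int n dvd v"
    if "[v = w] (mod d)" "k * d < w" "w < (k + 1) * d" for v w k
    using that not_dvd_between_multiples cong_dvd_iff dvd_trans \<open>d dvd int n\<close> by metis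
  have r: "d < 3 * (x mod d)" "2 * (x mod d) < d" if "x \<in> S" for x
    using residues[OF that] unfolding between_third_and_half_def by auto
  show "\<not> int n dvd x" if "x \<in> S" for x
    by (rule not_dvd[of _ "x mod d" 0]) (use r[OF that] in simp_all)
  show "\<not> int n dvd x + y" if "x \<in> S" "y \<in> S" for x y
    by (rule not_dvd[of _ "x mod d + y mod d" 0])
      (use r[OF that(1)] r[OF that(2)] in \<open>simp_all add: cong_add\<close>)
  show "\<not> int n dvd x + y + z" if "x \<in> S" "y \<in> S" "z \<in> S" for x y z
    by (rule not_dvd[of _ "x mod d + y mod d + z mod d" 1])
      (use r[OF that(1)] r[OF that(2)] r[OF that(3)] in \<open>simp_all add: cong_add\<close>)
  show "\<not> int n dvd x + y - z" if "x \<in> S" "y \<in> S" "z \<in> S" for x y z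
    by (rule not_dvd[of _ "x mod d + y mod d - z mod d" 0])
      (use r[OF that(1)] r[OF that(2)] r[OF that(3)] in \<open>simp_all add: cong_add cong_diff\<close>)
qed

lemma card_mod_preimage:
  fixes d :: int and R :: "int set"
  assumes "0 < d" "R \<subseteq> {1..<d}"
  shows "card {x \<in> {1..int m * d}. x mod d \<in> R} = m * card R"
proof -
  define f where "f = (\<lambda>(q, r). q * d + r)"
  have "{x \<in> {1..int m * d}. x mod d \<in> R} = f ` ({0..<int m} \<times> R)"
  proof (intro set_eqI iffI)
    fix x assume x: "x \<in> {x \<in> {1..int m * d}. x mod d \<in> R}"
    then have "1 \<le> x mod d" "x \<le> int m * d" using assms by auto
    then have "x div d * d < int m * d"
      using div_mult_mod_eq[of x d] by linarith
    with x \<open>0 < d\<close> have "x div d \<in> {0..<int m}"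
      by (auto simp: pos_imp_zdiv_nonneg_iff)
    with x show "x \<in> f ` ({0..<int m} \<times> R)"
      unfolding f_def by (intro image_eqI[of _ _ "(x div d, x mod d)"]) auto
  next
    fix x assume "x \<in> f ` ({0..<int m} \<times> R)"
    then obtain q r where x: "x = q * d + r" "0 \<le> q" "q + 1 \<le> int m" "r \<in> R"
      unfolding f_def by auto
    with assms have "1 \<le> r" "r < d" by auto
    moreover have "0 \<le> q * d" "q * d + d \<le> int m * d"
      using mult_right_mono[of "q + 1" "int m" d] x \<open>0 < d\<close> by (simp_all add: distrib_right)
    ultimately have "1 \<le> x" "x \<le> int m * d"
      using x(1) by linarith+
    moreover have "x mod d \<in> R"
      using x \<open>1 \<le> r\<close> \<open>r < d\<close> by simp
    ultimately show "x \<in> {x \<in> {1..int m * d}. x mod d \<in> R}"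
      by simp
  qed
  moreover have "inj_on f ({0..<int m} \<times> R)"
  proof (rule inj_onI, clarsimp simp: f_def)
    fix q r q' r' assume "r \<in> R" "r' \<in> R" and eq: "q * d + r = q' * d + r'"
    from \<open>r \<in> R\<close> \<open>r' \<in> R\<close> assms have "r = (q * d + r) mod d" "r' = (q' * d + r') mod d"
      by auto
    with eq have "r = r'" by simp
    with eq \<open>0 < d\<close> show "q = q' \<and> r = r'" by simp
  qed
  ultimately show ?thesis
    by (simp add: card_image card_cartesian_product)
qed

lemma s_ge_odd_divisor:
  fixes d :: nat
  assumes "odd d" "d dvd n"
  shows "n div d * ((d + 1) div 6) \<le> s n 3"
proof -
  from \<open>d dvd n\<close> obtain m where n: "n = m * d" by (metis dvdE mult.commute)
  have "0 < d" using \<open>odd d\<close> by (rule odd_pos)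
  define S where "S = {x \<in> {1..int n}. x mod int d \<in> between_third_and_half (int d)}"
  have "between_third_and_half (int d) \<subseteq> {1..<int d}"
    unfolding between_third_and_half_def by auto
  moreover have "(int d + 1) div 6 = int ((d + 1) div 6)"
    by (simp add: zdiv_int)
  ultimately have "card S = m * ((d + 1) div 6)"
    using card_mod_preimage[of "int d" _ m] card_between_third_and_half[of "int d"] \<open>0 < d\<close> \<open>odd d\<close>
    unfolding S_def n by simp
  moreover have "sidon_type n 3 S"
    using \<open>0 < d\<close> \<open>d dvd n\<close>
    by (intro sidon_type_residues_between_third_and_half[of "int d"]) (auto simp: S_def)
  ultimately show ?thesis
    using card_le_s n \<open>0 < d\<close> by (metis nonzero_mult_div_cancel_right not_gr0)
qed

theorem theorem4p1:
  fixes n :: nat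
  assumes "n \<ge> 1"
  shows "(even n \<longrightarrow> n div 4 \<le> s n 3)
       \<and> (odd n \<and> \<not> (\<exists>d. d dvd n \<and> d mod 6 = 5) \<longrightarrow> (n + 1) div 6 \<le> s n 3)
       \<and> (\<forall>p :: nat. odd n \<and> p dvd n \<and> p mod 6 = 5 \<and> (\<forall>d. d dvd n \<and> d mod 6 = 5 \<longrightarrow> p \<le> d)
            \<longrightarrow> real ((p + 1) * n) / real (6 * p) \<le> real (s n 3))"
proof (intro conjI impI allI)
  show "n div 4 \<le> s n 3" if "even n"
    using that by (rule s_ge_quarter)
  show "(n + 1) div 6 \<le> s n 3" if "odd n \<and> \<not> (\<exists>d. d dvd n \<and> d mod 6 = 5)"
    using s_ge_odd_divisor[of n n] that assms by simp
next
  fix p :: nat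
  assume "odd n \<and> p dvd n \<and> p mod 6 = 5 \<and> (\<forall>d. d dvd n \<and> d mod 6 = 5 \<longrightarrow> p \<le> d)"
  then have "p dvd n" "p mod 6 = 5" by auto
  then obtain m where n: "n = p * m" by (elim dvdE)
  have p: "p + 1 = 6 * (p div 6 + 1)" using \<open>p mod 6 = 5\<close> by presburger
  have "odd p" using \<open>p mod 6 = 5\<close> by presburger
  then have "n div p * ((p + 1) div 6) \<le> s n 3"
    using \<open>p dvd n\<close> by (rule s_ge_odd_divisor)
  moreover have "real ((p + 1) * n) / real (6 * p) = real (n div p * ((p + 1) div 6))"
    using \<open>odd p\<close> unfolding n p by (simp add: odd_pos field_simps)
  ultimately show "real ((p + 1) * n) / real (6 * p) \<le> real (s n 3)"
    by (metis of_nat_le_iff)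
qed

end
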